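(* Let $\mathcal{M}=\langle \mathcal{S},\mathcal{A},\mathcal{P},\mathcal{R},\gamma\rangle$ be a deterministic finite MDP with next-state function $\mathscr{N}$, and let $d_{\sim}$ be the unique function $\mathcal{S}\times\mathcal{S}\to\mathbb{R}$ satisfying $d_{\sim}(s,t)=\max_{a\in\mathcal{A}}\left(|\mathcal{R}(s,a)-\mathcal{R}(t,a)|+\gamma\,d_{\sim}(\mathscr{N}(s,a),\mathscr{N}(t,a))\right)$. Let $(s_n,t_n,a_n)_{n\ge1}$ be any sequence of samples drawn from a distribution $\mathcal{D}$ on $\mathcal{S}\times\mathcal{S}\times\mathcal{A}$ with full support. Let $d_0\equiv0$ and for $n\ge1$ set $d_n(s,t)=d_{n-1}(s,t)$ for $(s,t)\ne(s_n,t_n)$ and $d_n(s_n,t_n)=\max\left(d_{n-1}(s_n,t_n),\ |\mathcal{R}(s_n,a_n)-\mathcal{R}(t_n,a_n)|+\gamma\,d_{n-1}(\mathscr{N}(s_n,a_n),\mathscr{N}(t_n,a_n))\right)$. Then $d_n\le d_{\sim}$ pointwise for all $n\in\mathbb{N}$.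
   Context: A finite MDP has finite state set $\mathcal{S}$, finite action set $\mathcal{A}$, transition kernel $\mathcal{P}$, bounded reward $\mathcal{R}:\mathcal{S}\times\mathcal{A}\to\mathbb{R}$, and discount $\gamma\in[0,1)$; it is deterministic if for every $s,a$ there is a unique $\mathscr{N}(s,a)$ with $\mathcal{P}(s,a)(\mathscr{N}(s,a))=1$. *)

theory Defs
  imports "HOL-Probability.Probability"
begin

definition deterministic_with :: "('s \<Rightarrow> 'a \<Rightarrow> 's pmf) \<Rightarrow> ('s \<Rightarrow> 'a \<Rightarrow> 's) \<Rightarrow> bool" where
  "deterministic_with P N \<longleftrightarrow> (\<forall>s a. pmf (P s a) (N s a) = 1)"

text \<open>Sampled iterates d_n; samples are indexed from 1 (smp 0 is unused).\<close>
primrec sampled_iter ::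
  "('s \<Rightarrow> 'a \<Rightarrow> real) \<Rightarrow> ('s \<Rightarrow> 'a \<Rightarrow> 's) \<Rightarrow> real \<Rightarrow> (nat \<Rightarrow> 's \<times> 's \<times> 'a)
     \<Rightarrow> nat \<Rightarrow> 's \<Rightarrow> 's \<Rightarrow> real" where
  "sampled_iter R N \<gamma> smp 0 = (\<lambda>s t. 0)"
| "sampled_iter R N \<gamma> smp (Suc n) =
     (\<lambda>s t. let (sn, tn, an) = smp (Suc n); d = sampled_iter R N \<gamma> smp n in
        if (s, t) = (sn, tn)
        then max (d sn tn) (\<bar>R sn an - R tn an\<bar> + \<gamma> * d (N sn an) (N tn an))
        else d s t)"

end

theory Submission
  imports Defs
begin

text \<open>The fixed point dsim dominates the right-hand side of the update for every action, and
  it is nonnegative: at a pair minimising dsim we get m \<ge> \<gamma> m, so m \<ge> 0 as \<gamma> < 1. Hence an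
  update turns any d \<le> dsim into some d' \<le> dsim, and the iterates stay below dsim by induction
  from the zero function, whatever the samples are.\<close>

lemma nonneg_if_dominates_discounted_successor:
  fixes f :: "'x::finite \<Rightarrow> real"
  assumes "0 \<le> \<gamma>" "\<gamma> < 1"
    and dominates: "\<And>x. \<gamma> * f (g x) \<le> f x"
  shows "0 \<le> f x"
proof -
  have "Min (range f) \<in> range f"
    by (rule Min_in) auto
  then obtain p where p: "f p = Min (range f)"
    by (metis rangeE)
  then have p_min: "f p \<le> f y" for y
    by simp
  have "\<gamma> * f p \<le> \<gamma> * f (g p)"
    using p_min \<open>0 \<le> \<gamma>\<close> by (simp add: mult_left_mono)
  also have "\<dots> \<le> f p"
    by (rule dominates)
  finally have "(1 - \<gamma>) * f p \<ge> 0"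
    by (simp add: algebra_simps)
  then have "0 \<le> f p"
    using \<open>\<gamma> < 1\<close> by (simp add: zero_le_mult_iff)
  then show ?thesis
    using p_min order_trans by blast
qed

lemma fixpoint_ge_action_term:
  fixes d :: "'s \<Rightarrow> 's \<Rightarrow> real"
  assumes "\<And>s t. d s t = (MAX a\<in>(UNIV :: 'a::finite set). \<bar>R s a - R t a\<bar> + \<gamma> * d (N s a) (N t a))"
  shows "\<bar>R s a - R t a\<bar> + \<gamma> * d (N s a) (N t a) \<le> d s t"
  unfolding assms[of s t] by (rule Max_ge) auto

lemma sampled_iter_le:
  assumes "0 \<le> \<gamma>"
    and nonneg: "\<And>s t. 0 \<le> d s t"
    and ge_action_term: "\<And>s t a. \<bar>R s a - R t a\<bar> + \<gamma> * d (N s a) (N t a) \<le> d s t"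
  shows "sampled_iter R N \<gamma> smp n s t \<le> d s t"
proof (induction n arbitrary: s t)
  case 0
  show ?case using nonneg by simp
next
  case (Suc n)
  obtain sn tn an where smp_Suc: "smp (Suc n) = (sn, tn, an)"
    by (cases "smp (Suc n)") auto
  have "\<gamma> * sampled_iter R N \<gamma> smp n (N sn an) (N tn an) \<le> \<gamma> * d (N sn an) (N tn an)"
    using Suc.IH \<open>0 \<le> \<gamma>\<close> by (simp add: mult_left_mono)
  then have "\<bar>R sn an - R tn an\<bar> + \<gamma> * sampled_iter R N \<gamma> smp n (N sn an) (N tn an) \<le> d sn tn"
    using ge_action_term[of sn an tn] by linarith
  then show ?case
    using Suc.IH smp_Suc by (auto simp: Let_def)
qed

theorem lemma3:
  fixes P :: "'s::finite \<Rightarrow> 'a::finite \<Rightarrow> 's pmf"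
    and N :: "'s \<Rightarrow> 'a \<Rightarrow> 's"
    and R :: "'s \<Rightarrow> 'a \<Rightarrow> real"
    and \<gamma> :: real
    and dsim :: "'s \<Rightarrow> 's \<Rightarrow> real"
    and D :: "('s \<times> 's \<times> 'a) pmf"
    and smp :: "nat \<Rightarrow> 's \<times> 's \<times> 'a"
  assumes "0 \<le> \<gamma>" and "\<gamma> < 1"
    and "deterministic_with P N"
    and "\<forall>s t. dsim s t = (MAX a\<in>UNIV. \<bar>R s a - R t a\<bar> + \<gamma> * dsim (N s a) (N t a))"
    and "set_pmf D = UNIV"
    and "\<forall>n\<ge>1. smp n \<in> set_pmf D"
  shows "\<forall>n s t. sampled_iter R N \<gamma> smp n s t \<le> dsim s t"
proof -
  have ge_action_term: "\<bar>R s a - R t a\<bar> + \<gamma> * dsim (N s a) (N t a) \<le> dsim s t" for s t a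
    using fixpoint_ge_action_term[of dsim R \<gamma> N] assms(4) by blast
  have dsim_nonneg: "0 \<le> dsim s t" for s t
  proof -
    fix a :: 'a
    have "\<gamma> * dsim (N s' a) (N t' a) \<le> dsim s' t'" for s' t'
      using ge_action_term[of s' a t'] by linarith
    then show ?thesis
      using nonneg_if_dominates_discounted_successor[of \<gamma> "case_prod dsim"
          "\<lambda>(s', t'). (N s' a, N t' a)" "(s, t)"] assms(1,2)
      by (simp add: case_prod_beta)
  qed
  then show ?thesis
    using sampled_iter_le[of \<gamma> dsim R N] assms(1) dsim_nonneg ge_action_term by blast
qed

end
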